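(* Consider the graphs $K^{h}_{n}$ ($3\le h\le n-1$), $K^{s+t}_{n}$ ($s,t\ge 2$, $n=s+t$) and $K^{s,t}_{n}$ ($s,t\ge2$, $n=s+t-1$). No two non-isomorphic graphs among all graphs of these three types are $D$-cospectral.
   Context: For a connected graph $G$, the distance matrix $D(G)$ has as $(i,j)$-entry the distance between the $i$-th and $j$-th vertices; two graphs are $D$-cospectral if their distance matrices have the same spectrum. $K^{h}_{n}$: the graph on $n$ vertices obtained from $K_h$ by attaching $n-h$ pendant edges to one vertex of $K_h$. $K^{s+t}_{n}$: the graph obtained from disjoint $K_s$ and $K_t$ by adding one edge joining a vertex of $K_s$ to a vertex of $K_t$. $K^{s,t}_{n}$: the graph obtained from disjoint $K_s$ and $K_t$ by identifying a vertex of $K_s$ with a vertex of $K_t$. *)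

theory Defs
  imports "Jordan_Normal_Form.Char_Poly"
begin

text \<open>A simple graph on the vertex set {0..<n} is given by an adjacency
  predicate E (symmetric, irreflexive, only relating vertices below n).\<close>

definition graph_dist :: "(nat \<Rightarrow> nat \<Rightarrow> bool) \<Rightarrow> nat \<Rightarrow> nat \<Rightarrow> nat" where
  "graph_dist E i j = (LEAST k. (E ^^ k) i j)"

definition dist_matrix :: "nat \<Rightarrow> (nat \<Rightarrow> nat \<Rightarrow> bool) \<Rightarrow> real mat" where
  "dist_matrix n E = mat n n (\<lambda>(i, j). real (graph_dist E i j))"

text \<open>Two graphs are D-cospectral iff their distance matrices have the same
  spectrum (with multiplicities), i.e. the same characteristic polynomial.\<close>
definition D_cospectral ::
  "nat \<Rightarrow> (nat \<Rightarrow> nat \<Rightarrow> bool) \<Rightarrow> nat \<Rightarrow> (nat \<Rightarrow> nat \<Rightarrow> bool) \<Rightarrow> bool" where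
  "D_cospectral n1 E1 n2 E2 \<longleftrightarrow> char_poly (dist_matrix n1 E1) = char_poly (dist_matrix n2 E2)"

definition graph_iso ::
  "nat \<Rightarrow> (nat \<Rightarrow> nat \<Rightarrow> bool) \<Rightarrow> nat \<Rightarrow> (nat \<Rightarrow> nat \<Rightarrow> bool) \<Rightarrow> bool" where
  "graph_iso n1 E1 n2 E2 \<longleftrightarrow> n1 = n2 \<and>
     (\<exists>f. bij_betw f {0..<n1} {0..<n2} \<and>
          (\<forall>i\<in>{0..<n1}. \<forall>j\<in>{0..<n1}. E1 i j \<longleftrightarrow> E2 (f i) (f j)))"

text \<open>K^h_n: clique on {0..<h}, vertices h..n-1 pendant at vertex 0.\<close>
definition K_pend :: "nat \<Rightarrow> nat \<Rightarrow> nat \<Rightarrow> nat \<Rightarrow> bool" where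
  "K_pend n h i j \<longleftrightarrow> i \<noteq> j \<and> i < n \<and> j < n \<and>
     ((i < h \<and> j < h) \<or> (i = 0 \<and> h \<le> j) \<or> (j = 0 \<and> h \<le> i))"

text \<open>K^{s+t}_n: cliques on {0..<s} and {s..<s+t}, plus the edge 0--s.\<close>
definition K_sum :: "nat \<Rightarrow> nat \<Rightarrow> nat \<Rightarrow> nat \<Rightarrow> bool" where
  "K_sum s t i j \<longleftrightarrow> i \<noteq> j \<and> i < s + t \<and> j < s + t \<and>
     ((i < s \<and> j < s) \<or> (s \<le> i \<and> s \<le> j) \<or> (i = 0 \<and> j = s) \<or> (i = s \<and> j = 0))"

text \<open>K^{s,t}_n: cliques on {0..<s} and on {0} \<union> {s..<s+t-1}, sharing vertex 0.\<close>
definition K_join :: "nat \<Rightarrow> nat \<Rightarrow> nat \<Rightarrow> nat \<Rightarrow> bool" where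
  "K_join s t i j \<longleftrightarrow> i \<noteq> j \<and> i < s + t - 1 \<and> j < s + t - 1 \<and>
     ((i < s \<and> j < s) \<or> ((i = 0 \<or> s \<le> i) \<and> (j = 0 \<or> s \<le> j)))"

definition in_families :: "nat \<Rightarrow> (nat \<Rightarrow> nat \<Rightarrow> bool) \<Rightarrow> bool" where
  "in_families n E \<longleftrightarrow>
     (\<exists>h. 3 \<le> h \<and> h \<le> n - 1 \<and> E = K_pend n h) \<or>
     (\<exists>s t. 2 \<le> s \<and> 2 \<le> t \<and> n = s + t \<and> E = K_sum s t) \<or>
     (\<exists>s t. 2 \<le> s \<and> 2 \<le> t \<and> n = s + t - 1 \<and> E = K_join s t)"

end

theory Submission
  imports Defs
begin

text \<open>For a hollow (zero-diagonal) matrix D of order n, the coefficients of x^(n-2) and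
  x^(n-3) in its characteristic polynomial are -tr(D^2)/2 and -tr(D^3)/3; this follows by
  induction on n, since the derivative of the characteristic polynomial is the sum of those of
  the principal minors of order n - 1. So D-cospectral graphs have equal tr(D^2) and tr(D^3).
  In each of the three families the vertices fall into at most four classes such that the
  distance between two distinct vertices only depends on their classes; hence both traces are
  explicit polynomials in n and h (for K^h_n), resp. in n and st. Within a family these
  polynomials determine h, resp. {s, t}; across families they are incompatible, except that
  K^(n-1)_n and K^(n-1,2)_n are the same graph.\<close>

section \<open>Characteristic polynomials of hollow matrices\<close>

lemma det_expand_first_row:
  assumes "(A :: 'a :: comm_ring_1 mat) \<in> carrier_mat (Suc n) (Suc n)"
  shows "det A = (\<Sum>j<Suc n. A $$ (0, j) * (-1) ^ j * det (mat_delete A 0 j))"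
  using laplace_expansion_row[OF assms, of 0] by (simp add: cofactor_def mult.assoc)

lemma det_dim_one: "(A :: 'a :: comm_ring_1 mat) \<in> carrier_mat 1 1 \<Longrightarrow> det A = A $$ (0, 0)"
  by (subst det_expand_first_row) (auto intro!: det_dim_zero simp: mat_delete_def)

lemma det_dim_two:
  assumes A: "(A :: 'a :: comm_ring_1 mat) \<in> carrier_mat 2 2"
  shows "det A = A $$ (0, 0) * A $$ (1, 1) - A $$ (0, 1) * A $$ (1, 0)"
proof -
  have "A \<in> carrier_mat (Suc 1) (Suc 1)" using A by (simp add: numeral_2_eq_2)
  then show ?thesis
    using A by (simp add: det_expand_first_row lessThan_Suc det_dim_one mat_delete_def)
qed

lemma det_dim_three:
  assumes A: "(A :: 'a :: comm_ring_1 mat) \<in> carrier_mat 3 3"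
  shows "det A = A $$ (0, 0) * (A $$ (1, 1) * A $$ (2, 2) - A $$ (1, 2) * A $$ (2, 1))
     - A $$ (0, 1) * (A $$ (1, 0) * A $$ (2, 2) - A $$ (1, 2) * A $$ (2, 0))
     + A $$ (0, 2) * (A $$ (1, 0) * A $$ (2, 1) - A $$ (1, 1) * A $$ (2, 0))"
proof -
  have "A \<in> carrier_mat (Suc 2) (Suc 2)" using A by (simp add: numeral_3_eq_3)
  then show ?thesis
    using A by (simp add: det_expand_first_row lessThan_Suc numeral_3_eq_3 numeral_2_eq_2
        det_dim_two mat_delete_def algebra_simps)
qed

definition hollow_mat :: "'a :: zero mat \<Rightarrow> bool" where
  "hollow_mat A \<longleftrightarrow> (\<forall>i<dim_row A. A $$ (i, i) = 0)"

definition trace_square :: "'a :: comm_ring_1 mat \<Rightarrow> 'a" where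
  "trace_square A = (\<Sum>i<dim_row A. \<Sum>j<dim_row A. A $$ (i, j) * A $$ (j, i))"

definition trace_cube :: "'a :: comm_ring_1 mat \<Rightarrow> 'a" where
  "trace_cube A =
     (\<Sum>i<dim_row A. \<Sum>j<dim_row A. \<Sum>k<dim_row A. A $$ (i, j) * A $$ (j, k) * A $$ (k, i))"

lemma hollow_mat_delete:
  "A \<in> carrier_mat n n \<Longrightarrow> hollow_mat A \<Longrightarrow> hollow_mat (mat_delete A i i)"
  by (auto simp: hollow_mat_def mat_delete_def)

lemma sum_insert_index:
  assumes "i < Suc m"
  shows "(\<Sum>j<m. f (insert_index i j)) = (\<Sum>j\<in>{..<Suc m} - {i}. f j)"
proof -
  have image: "insert_index i ` {..<m} = {..<Suc m} - {i}"
    using insert_index_image[OF assms] by (simp add: atLeast0LessThan)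
  show ?thesis
    unfolding image[symmetric] by (simp add: sum.reindex[OF insert_index_inj_on])
qed

lemma trace_square_mat_delete:
  assumes A: "A \<in> carrier_mat (Suc m) (Suc m)" and hollow: "hollow_mat A" and i: "i < Suc m"
  shows "trace_square (mat_delete A i i) = trace_square A - 2 * (\<Sum>j<Suc m. A $$ (i, j) * A $$ (j, i))"
proof -
  let ?U = "{..<Suc m} - {i}"
  have "trace_square (mat_delete A i i) =
      (\<Sum>j<m. \<Sum>k<m. A $$ (insert_index i j, insert_index i k) * A $$ (insert_index i k, insert_index i j))"
    using A i by (auto simp: trace_square_def mat_delete_index intro!: sum.cong)
  also have "\<dots> = (\<Sum>j\<in>?U. \<Sum>k\<in>?U. A $$ (j, k) * A $$ (k, j))"
    using i by (simp add: sum_insert_index[where f = "\<lambda>k. A $$ (_, k) * A $$ (k, _)"]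
        sum_insert_index[where f = "\<lambda>j. \<Sum>k\<in>?U. A $$ (j, k) * A $$ (k, j)"])
  also have "\<dots> = trace_square A - 2 * (\<Sum>j<Suc m. A $$ (i, j) * A $$ (j, i))"
    using A i hollow
    by (simp add: trace_square_def hollow_mat_def sum_diff1 sum_subtractf mult.commute)
  finally show ?thesis .
qed

lemma trace_cube_mat_delete:
  assumes A: "A \<in> carrier_mat (Suc m) (Suc m)" and hollow: "hollow_mat A" and i: "i < Suc m"
  shows "trace_cube (mat_delete A i i) =
    trace_cube A - 3 * (\<Sum>j<Suc m. \<Sum>k<Suc m. A $$ (i, j) * A $$ (j, k) * A $$ (k, i))"
proof -
  let ?U = "{..<Suc m} - {i}"
  let ?ins = "insert_index i"
  have "trace_cube (mat_delete A i i) = (\<Sum>j<m. \<Sum>k<m. \<Sum>l<m.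
      A $$ (?ins j, ?ins k) * A $$ (?ins k, ?ins l) * A $$ (?ins l, ?ins j))"
    using A i by (auto simp: trace_cube_def mat_delete_index intro!: sum.cong)
  also have "\<dots> = (\<Sum>j\<in>?U. \<Sum>k\<in>?U. \<Sum>l\<in>?U. A $$ (j, k) * A $$ (k, l) * A $$ (l, j))"
    using i by (simp add: sum_insert_index[where f = "\<lambda>l. A $$ (_, _) * A $$ (_, l) * A $$ (l, _)"]
        sum_insert_index[where f = "\<lambda>k. \<Sum>l\<in>?U. A $$ (_, k) * A $$ (k, l) * A $$ (l, _)"]
        sum_insert_index[where f = "\<lambda>j. \<Sum>k\<in>?U. \<Sum>l\<in>?U. A $$ (j, k) * A $$ (k, l) * A $$ (l, j)"])
  also have "\<dots> = trace_cube A - 3 * (\<Sum>j<Suc m. \<Sum>k<Suc m. A $$ (i, j) * A $$ (j, k) * A $$ (k, i))"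
  proof -
    have diag: "\<And>j. j < Suc m \<Longrightarrow> A $$ (j, j) = 0" using hollow A by (auto simp: hollow_mat_def)
    \<comment> \<open>the removed closed walks pass through i once, and each is counted in its three rotations\<close>
    have rotate1: "(\<Sum>j<Suc m. \<Sum>k<Suc m. A $$ (j, k) * A $$ (k, i) * A $$ (i, j)) =
        (\<Sum>j<Suc m. \<Sum>k<Suc m. A $$ (i, j) * A $$ (j, k) * A $$ (k, i))"
      by (simp add: ac_simps)
    have rotate2: "(\<Sum>j<Suc m. \<Sum>l<Suc m. A $$ (j, i) * A $$ (i, l) * A $$ (l, j)) =
        (\<Sum>j<Suc m. \<Sum>k<Suc m. A $$ (i, j) * A $$ (j, k) * A $$ (k, i))"
      by (subst sum.swap) (simp add: ac_simps)
    show ?thesis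
      using i A unfolding trace_cube_def
      by (simp add: sum_diff1 sum_subtractf diag rotate1 rotate2 sum.distrib algebra_simps)
        (subst sum.swap, simp add: ac_simps)
  qed
  finally show ?thesis .
qed

lemma sum_trace_square_principal_minors:
  assumes A: "A \<in> carrier_mat (Suc m) (Suc m)" and hollow: "hollow_mat A"
  shows "(\<Sum>i<Suc m. trace_square (mat_delete A i i)) = (of_nat (Suc m) - 2) * trace_square A"
proof -
  have "(\<Sum>i<Suc m. \<Sum>j<Suc m. A $$ (i, j) * A $$ (j, i)) = trace_square A"
    using A by (simp add: trace_square_def del: sum.lessThan_Suc)
  then show ?thesis
    by (simp add: trace_square_mat_delete[OF A hollow] sum_subtractf sum_distrib_left[symmetric]
        algebra_simps del: sum.lessThan_Suc)
qed

lemma sum_trace_cube_principal_minors: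
  assumes A: "A \<in> carrier_mat (Suc m) (Suc m)" and hollow: "hollow_mat A"
  shows "(\<Sum>i<Suc m. trace_cube (mat_delete A i i)) = (of_nat (Suc m) - 3) * trace_cube A"
proof -
  have "(\<Sum>i<Suc m. \<Sum>j<Suc m. \<Sum>k<Suc m. A $$ (i, j) * A $$ (j, k) * A $$ (k, i)) = trace_cube A"
    using A by (simp add: trace_cube_def del: sum.lessThan_Suc)
  then show ?thesis
    by (simp add: trace_cube_mat_delete[OF A hollow] sum_subtractf sum_distrib_left[symmetric]
        algebra_simps del: sum.lessThan_Suc)
qed

lemma coeff_0_char_poly:
  assumes A: "(A :: 'a :: field mat) \<in> carrier_mat n n"
  shows "coeff (char_poly A) 0 = det (- A)"
proof -
  have "char_matrix A 0 = A" using A unfolding char_matrix_def by auto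
  then show ?thesis using char_poly_matrix[OF A, of 0] by (simp add: poly_0_coeff_0)
qed

lemma coeff_char_poly_hollow_induct:
  fixes P :: "'a :: field_char_0 mat \<Rightarrow> 'a"
  assumes base: "\<And>A. A \<in> carrier_mat k k \<Longrightarrow> hollow_mat A \<Longrightarrow> det (- A) = - P A / of_nat k"
    and minors: "\<And>m A. A \<in> carrier_mat (Suc m) (Suc m) \<Longrightarrow> hollow_mat A \<Longrightarrow>
      (\<Sum>i<Suc m. P (mat_delete A i i)) = (of_nat (Suc m) - of_nat k) * P A"
  shows "k \<le> n \<Longrightarrow> A \<in> carrier_mat n n \<Longrightarrow> hollow_mat A \<Longrightarrow>
    coeff (char_poly A) (n - k) = - P A / of_nat k"
proof (induction n arbitrary: A rule: nat_induct_at_least)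
  case base
  then show ?case by (simp add: coeff_0_char_poly assms(1))
next
  case (Suc m A)
  note A = Suc.prems(1) and hollow = Suc.prems(2)
  have "of_nat (Suc (m - k)) * coeff (char_poly A) (Suc (m - k)) = coeff (pderiv (char_poly A)) (m - k)"
    by (simp add: coeff_pderiv)
  also have "\<dots> = (\<Sum>i<Suc m. coeff (char_poly (mat_delete A i i)) (m - k))"
    by (simp add: pderiv_char_poly[OF A] coeff_sum)
  also have "\<dots> = (\<Sum>i<Suc m. - P (mat_delete A i i) / of_nat k)"
    using Suc.IH A hollow_mat_delete[OF A hollow] mat_delete_carrier[OF A] by simp
  also have "\<dots> = - (\<Sum>i<Suc m. P (mat_delete A i i)) / of_nat k"
    by (simp add: sum_negf sum_divide_distrib del: sum.lessThan_Suc)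
  also have "\<dots> = of_nat (Suc (m - k)) * (- P A / of_nat k)"
    using Suc.hyps by (simp add: minors[OF A hollow] del: sum.lessThan_Suc)
  finally have "coeff (char_poly A) (Suc (m - k)) = - P A / of_nat k"
    by (metis mult_left_cancel of_nat_neq_0)
  then show ?case
    using Suc.hyps by (simp add: Suc_diff_le)
qed

lemma coeff_char_poly_trace_square:
  fixes A :: "'a :: field_char_0 mat"
  assumes "2 \<le> n" and "A \<in> carrier_mat n n" and "hollow_mat A"
  shows "coeff (char_poly A) (n - 2) = - trace_square A / 2"
proof -
  have "coeff (char_poly A) (n - 2) = - trace_square A / of_nat 2"
  proof (rule coeff_char_poly_hollow_induct[OF _ _ assms])
    fix B :: "'a mat" assume "B \<in> carrier_mat 2 2" "hollow_mat B"
    then show "det (- B) = - trace_square B / of_nat 2"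
      by (force simp: det_dim_two trace_square_def hollow_mat_def numeral_2_eq_2 lessThan_Suc)
  qed (simp add: sum_trace_square_principal_minors del: sum.lessThan_Suc)
  then show ?thesis by simp
qed

lemma coeff_char_poly_trace_cube:
  fixes A :: "'a :: field_char_0 mat"
  assumes "3 \<le> n" and "A \<in> carrier_mat n n" and "hollow_mat A"
  shows "coeff (char_poly A) (n - 3) = - trace_cube A / 3"
proof -
  have "coeff (char_poly A) (n - 3) = - trace_cube A / of_nat 3"
  proof (rule coeff_char_poly_hollow_induct[OF _ _ assms])
    fix B :: "'a mat" assume "B \<in> carrier_mat 3 3" "hollow_mat B"
    then show "det (- B) = - trace_cube B / of_nat 3"
      by (force simp: det_dim_three trace_cube_def hollow_mat_def numeral_3_eq_3 numeral_2_eq_2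
        lessThan_Suc algebra_simps)
  qed (simp add: sum_trace_cube_principal_minors del: sum.lessThan_Suc)
  then show ?thesis by simp
qed

section \<open>Traces of distance matrices\<close>

lemma sum_if_eq_diff:
  "(i :: nat) < n \<Longrightarrow> (\<Sum>j<n. if i = j then 0 else f j) = (\<Sum>j<n. f j) - (f i :: 'a :: ab_group_add)"
  by (simp add: sum.If_cases sum_diff1 flip: Diff_eq)

lemma trace_square_off_diagonal:
  assumes D: "D \<in> carrier_mat n n"
    and entries: "\<And>i j. i < n \<Longrightarrow> j < n \<Longrightarrow> D $$ (i, j) = (if i = j then 0 else G i j)"
  shows "trace_square D = (\<Sum>i<n. \<Sum>j<n. G i j * G j i) - (\<Sum>i<n. G i i * G i i)"
proof -
  have "trace_square D = (\<Sum>i<n. \<Sum>j<n. if i = j then 0 else G i j * G j i)"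
    unfolding trace_square_def using D entries by (auto intro!: sum.cong)
  also have "\<dots> = (\<Sum>i<n. (\<Sum>j<n. G i j * G j i) - G i i * G i i)"
    by (rule sum.cong) (auto simp: sum_if_eq_diff)
  finally show ?thesis by (simp add: sum_subtractf)
qed

lemma trace_cube_off_diagonal:
  assumes D: "D \<in> carrier_mat n n"
    and entries: "\<And>i j. i < n \<Longrightarrow> j < n \<Longrightarrow> D $$ (i, j) = (if i = j then 0 else G i j)"
  shows "trace_cube D = (\<Sum>i<n. \<Sum>j<n. \<Sum>k<n. G i j * G j k * G k i)
    - 3 * (\<Sum>i<n. \<Sum>k<n. G i i * G i k * G k i) + 2 * (\<Sum>i<n. G i i * G i i * G i i)"
proof -
  let ?T = "\<lambda>i j. (\<Sum>k<n. G i j * G j k * G k i) - G i j * G j i * G i i - G i j * G j j * G j i"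
  have inner: "(\<Sum>k<n. if k = i then 0 else if j = k then 0 else G i j * G j k * G k i) = ?T i j"
    if "i < n" "j < n" "i \<noteq> j" for i j
  proof -
    have "(\<Sum>k<n. if k = i then 0 else if j = k then 0 else G i j * G j k * G k i) =
        (\<Sum>k<n. if j = k then 0 else G i j * G j k * G k i) - G i j * G j i * G i i"
      using that sum_if_eq_diff[of i n "\<lambda>k. if j = k then 0 else G i j * G j k * G k i"]
      by (simp add: eq_commute[of i])
    then show ?thesis using that by (simp add: sum_if_eq_diff)
  qed
  have "trace_cube D = (\<Sum>i<n. \<Sum>j<n. if i = j then 0 else
      (\<Sum>k<n. if k = i then 0 else if j = k then 0 else G i j * G j k * G k i))"
    unfolding trace_cube_def using D entries by (auto intro!: sum.cong)
  also have "\<dots> = (\<Sum>i<n. \<Sum>j<n. if i = j then 0 else ?T i j)"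
    by (intro sum.cong refl) (simp add: inner)
  also have "\<dots> = (\<Sum>i<n. (\<Sum>j<n. ?T i j) - ?T i i)"
    by (rule sum.cong) (auto simp: sum_if_eq_diff)
  also have "\<dots> = (\<Sum>i<n. \<Sum>j<n. \<Sum>k<n. G i j * G j k * G k i) - (\<Sum>i<n. \<Sum>j<n. G i j * G j i * G i i)
     - (\<Sum>i<n. \<Sum>j<n. G i j * G j j * G j i) - (\<Sum>i<n. \<Sum>k<n. G i i * G i k * G k i)
     + 2 * (\<Sum>i<n. G i i * G i i * G i i)"
    by (simp add: sum_subtractf sum.distrib sum_distrib_left mult.assoc)
  also have "(\<Sum>i<n. \<Sum>j<n. G i j * G j i * G i i) = (\<Sum>i<n. \<Sum>k<n. G i i * G i k * G k i)"
    by (simp add: ac_simps)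
  also have "(\<Sum>i<n. \<Sum>j<n. G i j * G j j * G j i) = (\<Sum>i<n. \<Sum>k<n. G i i * G i k * G k i)"
    by (subst sum.swap) (simp add: ac_simps)
  finally show ?thesis by simp
qed

definition class_size :: "nat \<Rightarrow> (nat \<Rightarrow> nat) \<Rightarrow> nat \<Rightarrow> real" where
  "class_size n c a = real (card {i \<in> {..<n}. c i = a})"

lemma sum_by_class:
  assumes "finite K" and "c ` {..<n} \<subseteq> K"
  shows "(\<Sum>i<n. f (c i)) = (\<Sum>a\<in>K. class_size n c a * f a)"
proof -
  have "(\<Sum>i<n. f (c i)) = (\<Sum>a\<in>K. \<Sum>i\<in>{i \<in> {..<n}. c i = a}. f (c i))"
    by (rule sum.group[symmetric]) (use assms in auto)
  also have "\<dots> = (\<Sum>a\<in>K. class_size n c a * f a)"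
    by (rule sum.cong) (simp_all add: class_size_def)
  finally show ?thesis .
qed

lemma sum_by_class2:
  assumes K: "finite K" and c: "c ` {..<n} \<subseteq> K"
  shows "(\<Sum>i<n. \<Sum>j<n. f (c i) (c j)) =
    (\<Sum>a\<in>K. \<Sum>b\<in>K. class_size n c a * class_size n c b * f a b)"
  using sum_by_class[OF K c, where f = "\<lambda>a. \<Sum>j<n. f a (c j)"]
    sum_by_class[OF K c, where f = "f _"]
  by (simp add: sum_distrib_left mult.assoc)

lemma sum_by_class3:
  assumes K: "finite K" and c: "c ` {..<n} \<subseteq> K"
  shows "(\<Sum>i<n. \<Sum>j<n. \<Sum>k<n. f (c i) (c j) (c k)) =
    (\<Sum>a\<in>K. \<Sum>b\<in>K. \<Sum>d\<in>K. class_size n c a * class_size n c b * class_size n c d * f a b d)"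
  using sum_by_class[OF K c, where f = "\<lambda>a. \<Sum>j<n. \<Sum>k<n. f a (c j) (c k)"]
    sum_by_class2[OF K c, where f = "f _"]
  by (simp add: sum_distrib_left mult.assoc)

lemma relpowp_2_iff: "(E ^^ 2) i j \<longleftrightarrow> (\<exists>k. E i k \<and> E k j)"
  by (simp add: numeral_2_eq_2 relcompp_apply)

lemma relpowp_3_iff: "(E ^^ 3) i j \<longleftrightarrow> (\<exists>k l. E i k \<and> E k l \<and> E l j)"
  by (simp add: numeral_3_eq_3 relcompp_apply) blast

lemma graph_dist_self: "graph_dist E i i = 0"
  unfolding graph_dist_def by (rule Least_equality) auto

lemma graph_dist_adjacent: "i \<noteq> j \<Longrightarrow> E i j \<Longrightarrow> graph_dist E i j = 1"
  unfolding graph_dist_def by (rule Least_equality) (auto elim: relpowp_E2)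

lemma graph_dist_eq_2:
  assumes "i \<noteq> j" and "\<not> E i j" and "E i k" and "E k j"
  shows "graph_dist E i j = 2"
  unfolding graph_dist_def
proof (rule Least_equality)
  show "(E ^^ 2) i j" using assms by (auto simp: relpowp_2_iff)
next
  fix y assume "(E ^^ y) i j"
  with assms show "2 \<le> y" by (cases y; cases "y - 1"; auto)
qed

lemma graph_dist_eq_3:
  assumes "i \<noteq> j" and "\<not> E i j" and "\<forall>k. \<not> (E i k \<and> E k j)"
    and "E i k" and "E k l" and "E l j"
  shows "graph_dist E i j = 3"
  unfolding graph_dist_def
proof (rule Least_equality)
  show "(E ^^ 3) i j" using assms by (auto simp: relpowp_3_iff)
next
  fix y assume "(E ^^ y) i j"
  with assms show "3 \<le> y"
    by (cases y; cases "y - 1"; cases "y - 2"; auto simp: relcompp_apply)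
qed

lemma dist_matrix_carrier: "dist_matrix n E \<in> carrier_mat n n"
  by (simp add: dist_matrix_def)

lemma hollow_dist_matrix: "hollow_mat (dist_matrix n E)"
  by (simp add: dist_matrix_def hollow_mat_def graph_dist_self)

definition dist_power_sums :: "nat \<Rightarrow> (nat \<Rightarrow> nat \<Rightarrow> bool) \<Rightarrow> real \<times> real" where
  "dist_power_sums n E = (trace_square (dist_matrix n E), trace_cube (dist_matrix n E))"

lemma D_cospectral_dist_power_sums:
  assumes cospectral: "D_cospectral n1 E1 n2 E2" and "3 \<le> n1"
  shows "n1 = n2" and "dist_power_sums n1 E1 = dist_power_sums n2 E2"
proof -
  have cp: "char_poly (dist_matrix n1 E1) = char_poly (dist_matrix n2 E2)"
    using cospectral unfolding D_cospectral_def .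
  show n: "n1 = n2"
    using degree_monic_char_poly[OF dist_matrix_carrier, of n1 E1]
      degree_monic_char_poly[OF dist_matrix_carrier, of n2 E2] cp by simp
  have square: "coeff (char_poly (dist_matrix n1 E)) (n1 - 2) = - trace_square (dist_matrix n1 E) / 2" for E
    using \<open>3 \<le> n1\<close> coeff_char_poly_trace_square[OF _ dist_matrix_carrier hollow_dist_matrix]
    by simp
  have cube: "coeff (char_poly (dist_matrix n1 E)) (n1 - 3) = - trace_cube (dist_matrix n1 E) / 3" for E
    using \<open>3 \<le> n1\<close> coeff_char_poly_trace_cube[OF _ dist_matrix_carrier hollow_dist_matrix]
    by simp
  have "- trace_square (dist_matrix n1 E1) / 2 = - trace_square (dist_matrix n1 E2) / 2"
    using square[of E1] square[of E2] cp n by metis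
  moreover have "- trace_cube (dist_matrix n1 E1) / 3 = - trace_cube (dist_matrix n1 E2) / 3"
    using cube[of E1] cube[of E2] cp n by metis
  ultimately show "dist_power_sums n1 E1 = dist_power_sums n2 E2"
    using n by (simp add: dist_power_sums_def)
qed

text \<open>Here M a a is the distance between two distinct vertices of class a.\<close>

lemma dist_power_sums_by_classes:
  assumes K: "finite K" and c: "c ` {..<n} \<subseteq> K"
    and dist: "\<And>i j. i < n \<Longrightarrow> j < n \<Longrightarrow> i \<noteq> j \<Longrightarrow> real (graph_dist E i j) = M (c i) (c j)"
  defines "N \<equiv> class_size n c"
  shows "dist_power_sums n E =
    ((\<Sum>a\<in>K. \<Sum>b\<in>K. N a * N b * M a b * M b a) - (\<Sum>a\<in>K. N a * M a a ^ 2),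
     (\<Sum>a\<in>K. \<Sum>b\<in>K. \<Sum>d\<in>K. N a * N b * N d * M a b * M b d * M d a)
      - 3 * (\<Sum>a\<in>K. \<Sum>b\<in>K. N a * N b * M a a * M a b * M b a)
      + 2 * (\<Sum>a\<in>K. N a * M a a ^ 3))"
proof -
  have entries: "\<And>i j. i < n \<Longrightarrow> j < n \<Longrightarrow>
      dist_matrix n E $$ (i, j) = (if i = j then 0 else M (c i) (c j))"
    using dist by (simp add: dist_matrix_def graph_dist_self)
  have "trace_square (dist_matrix n E) =
      (\<Sum>i<n. \<Sum>j<n. M (c i) (c j) * M (c j) (c i)) - (\<Sum>i<n. M (c i) (c i) ^ 2)"
    using trace_square_off_diagonal[OF dist_matrix_carrier entries] by (simp add: power2_eq_square)
  moreover have "trace_cube (dist_matrix n E) =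
      (\<Sum>i<n. \<Sum>j<n. \<Sum>k<n. M (c i) (c j) * M (c j) (c k) * M (c k) (c i))
      - 3 * (\<Sum>i<n. \<Sum>k<n. M (c i) (c i) * M (c i) (c k) * M (c k) (c i))
      + 2 * (\<Sum>i<n. M (c i) (c i) ^ 3)"
    using trace_cube_off_diagonal[OF dist_matrix_carrier entries] by (simp add: power3_eq_cube)
  ultimately show ?thesis
    unfolding dist_power_sums_def N_def
      sum_by_class[OF K c, where f = "\<lambda>a. M a a ^ 2"] sum_by_class[OF K c, where f = "\<lambda>a. M a a ^ 3"]
      sum_by_class2[OF K c, where f = "\<lambda>a b. M a b * M b a"]
      sum_by_class2[OF K c, where f = "\<lambda>a b. M a a * M a b * M b a"]
      sum_by_class3[OF K c, where f = "\<lambda>a b d. M a b * M b d * M d a"]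
    by (simp add: mult.assoc)
qed

section \<open>The three families\<close>

text \<open>Classes: the vertex 0 carrying the pendant edges, the rest of the clique, the pendant vertices.\<close>

definition K_pend_class :: "nat \<Rightarrow> nat \<Rightarrow> nat" where
  "K_pend_class h i = (if i = 0 then 0 else if i < h then 1 else 2)"

definition K_pend_class_dist :: "nat \<Rightarrow> nat \<Rightarrow> real" where
  "K_pend_class_dist a b = (if a = 0 \<or> b = 0 \<or> (a = 1 \<and> b = 1) then 1 else 2)"

lemma graph_dist_K_pend:
  assumes "1 \<le> h" and "i < n" and "j < n" and "i \<noteq> j"
  shows "real (graph_dist (K_pend n h) i j) = K_pend_class_dist (K_pend_class h i) (K_pend_class h j)"
proof (cases "i = 0 \<or> j = 0 \<or> (i < h \<and> j < h)")
  case True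
  then have "graph_dist (K_pend n h) i j = 1"
    using assms by (intro graph_dist_adjacent) (auto simp: K_pend_def)
  then show ?thesis using True by (auto simp: K_pend_class_dist_def K_pend_class_def)
next
  case False
  then have "graph_dist (K_pend n h) i j = 2"
    using assms by (intro graph_dist_eq_2[where k = 0]) (auto simp: K_pend_def)
  then show ?thesis using False by (auto simp: K_pend_class_dist_def K_pend_class_def)
qed

lemma class_size_K_pend:
  assumes "1 \<le> h" and "h \<le> n"
  shows "class_size n (K_pend_class h) 0 = 1" and "class_size n (K_pend_class h) 1 = real h - 1"
    and "class_size n (K_pend_class h) 2 = real n - real h"
proof -
  have "{i \<in> {..<n}. K_pend_class h i = 0} = {0}" and "{i \<in> {..<n}. K_pend_class h i = 1} = {1..<h}"
    and "{i \<in> {..<n}. K_pend_class h i = 2} = {h..<n}"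
    using assms by (auto simp: K_pend_class_def)
  then show "class_size n (K_pend_class h) 0 = 1" and "class_size n (K_pend_class h) 1 = real h - 1"
    and "class_size n (K_pend_class h) 2 = real n - real h"
    using assms by (simp_all add: class_size_def)
qed

lemma dist_power_sums_K_pend:
  assumes "1 \<le> h" and "h \<le> n"
  shows "dist_power_sums n (K_pend n h) =
    (4 * real n ^ 2 - 10 * real n - 3 * real h ^ 2 + 9 * real h,
     8 * real n ^ 3 - 42 * real n ^ 2 + 46 * real n + 5 * real h ^ 3 + 3 * real h ^ 2 - 44 * real h
      + 36 * real h * real n - 12 * real h ^ 2 * real n)"
proof -
  have "K_pend_class h ` {..<n} \<subseteq> {0, 1, 2}" by (auto simp: K_pend_class_def)
  from dist_power_sums_by_classes[OF _ this graph_dist_K_pend[OF assms(1), where n = n]] show ?thesis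
    by (simp add: class_size_K_pend[OF assms, unfolded One_nat_def] K_pend_class_dist_def
        algebra_simps power2_eq_square power3_eq_cube)
qed

text \<open>Classes: the end 0 of the bridge, the rest of K_s, the end s of the bridge, the rest of K_t.\<close>

definition K_sum_class :: "nat \<Rightarrow> nat \<Rightarrow> nat" where
  "K_sum_class s i = (if i = 0 then 0 else if i < s then 1 else if i = s then 2 else 3)"

definition K_sum_class_dist :: "nat \<Rightarrow> nat \<Rightarrow> real" where
  "K_sum_class_dist a b =
    (if (a = 1 \<and> b = 3) \<or> (a = 3 \<and> b = 1) then 3
     else if (a = 0 \<and> b = 3) \<or> (a = 3 \<and> b = 0) \<or> (a = 1 \<and> b = 2) \<or> (a = 2 \<and> b = 1) then 2
     else 1)"

lemma graph_dist_K_sum: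
  assumes "1 \<le> s" and "i < s + t" and "j < s + t" and "i \<noteq> j"
  shows "real (graph_dist (K_sum s t) i j) = K_sum_class_dist (K_sum_class s i) (K_sum_class s j)"
proof -
  consider (adjacent) "K_sum s t i j"
    | (via_0) "\<not> K_sum s t i j" "i = 0 \<or> j = 0"
    | (via_s) "\<not> K_sum s t i j" "i = s \<or> j = s"
    | (far) "\<not> K_sum s t i j" "i \<noteq> 0" "j \<noteq> 0" "i \<noteq> s" "j \<noteq> s"
    by blast
  then show ?thesis
  proof cases
    case adjacent
    then have "graph_dist (K_sum s t) i j = 1" using assms by (intro graph_dist_adjacent)
    then show ?thesis using adjacent assms by (auto simp: K_sum_def K_sum_class_dist_def K_sum_class_def)
  next
    case via_0
    then have "graph_dist (K_sum s t) i j = 2"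
      using assms by (intro graph_dist_eq_2[where k = s]) (auto simp: K_sum_def)
    then show ?thesis using via_0 assms by (auto simp: K_sum_def K_sum_class_dist_def K_sum_class_def)
  next
    case via_s
    then have "graph_dist (K_sum s t) i j = 2"
      using assms by (intro graph_dist_eq_2[where k = 0]) (auto simp: K_sum_def)
    then show ?thesis using via_s assms by (auto simp: K_sum_def K_sum_class_dist_def K_sum_class_def)
  next
    case far
    then have "graph_dist (K_sum s t) i j = 3"
    proof (cases "i < s")
      case True
      then show ?thesis
        using far assms by (intro graph_dist_eq_3[where k = 0 and l = s]) (auto simp: K_sum_def)
    next
      case False
      then show ?thesis
        using far assms by (intro graph_dist_eq_3[where k = s and l = 0]) (auto simp: K_sum_def)
    qed
    then show ?thesis using far assms by (auto simp: K_sum_def K_sum_class_dist_def K_sum_class_def)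
  qed
qed

lemma class_size_K_sum:
  assumes "1 \<le> s" and "1 \<le> t"
  shows "class_size (s + t) (K_sum_class s) 0 = 1" and "class_size (s + t) (K_sum_class s) 1 = real s - 1"
    and "class_size (s + t) (K_sum_class s) 2 = 1" and "class_size (s + t) (K_sum_class s) 3 = real t - 1"
proof -
  have "{i \<in> {..<s + t}. K_sum_class s i = 0} = {0}" and "{i \<in> {..<s + t}. K_sum_class s i = 1} = {1..<s}"
    and "{i \<in> {..<s + t}. K_sum_class s i = 2} = {s}"
    and "{i \<in> {..<s + t}. K_sum_class s i = 3} = {Suc s..<s + t}"
    using assms by (auto simp: K_sum_class_def)
  then show "class_size (s + t) (K_sum_class s) 0 = 1" and "class_size (s + t) (K_sum_class s) 1 = real s - 1"
    and "class_size (s + t) (K_sum_class s) 2 = 1" and "class_size (s + t) (K_sum_class s) 3 = real t - 1"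
    using assms by (simp_all add: class_size_def)
qed

lemma dist_power_sums_K_sum:
  assumes "1 \<le> s" and "1 \<le> t" and n: "n = s + t"
  shows "dist_power_sums n (K_sum s t) =
    (real n ^ 2 - 11 * real n + 16 * real (s * t) + 4,
     real n ^ 3 - 18 * real n ^ 2 + 41 * real n - 12 + (24 * real n - 54) * real (s * t))"
proof -
  have "K_sum_class s ` {..<s + t} \<subseteq> {0, 1, 2, 3}" by (auto simp: K_sum_class_def)
  from dist_power_sums_by_classes[OF _ this graph_dist_K_sum[OF assms(1), where t = t]] show ?thesis
    unfolding n
    by (simp add: class_size_K_sum[OF assms(1,2), unfolded One_nat_def]
        K_sum_class_dist_def algebra_simps power2_eq_square power3_eq_cube)
qed

text \<open>Classes: the shared vertex 0, the rest of K_s, the rest of K_t.\<close>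

definition K_join_class :: "nat \<Rightarrow> nat \<Rightarrow> nat" where
  "K_join_class s i = (if i = 0 then 0 else if i < s then 1 else 2)"

definition K_join_class_dist :: "nat \<Rightarrow> nat \<Rightarrow> real" where
  "K_join_class_dist a b = (if a = 0 \<or> b = 0 \<or> a = b then 1 else 2)"

lemma graph_dist_K_join:
  assumes "1 \<le> s" and "i < s + t - 1" and "j < s + t - 1" and "i \<noteq> j"
  shows "real (graph_dist (K_join s t) i j) = K_join_class_dist (K_join_class s i) (K_join_class s j)"
proof (cases "i = 0 \<or> j = 0 \<or> (i < s \<and> j < s) \<or> (s \<le> i \<and> s \<le> j)")
  case True
  then have "graph_dist (K_join s t) i j = 1"
    using assms by (intro graph_dist_adjacent) (auto simp: K_join_def)
  then show ?thesis using True by (auto simp: K_join_class_dist_def K_join_class_def)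
next
  case False
  then have "graph_dist (K_join s t) i j = 2"
    using assms by (intro graph_dist_eq_2[where k = 0]) (auto simp: K_join_def)
  then show ?thesis using False by (auto simp: K_join_class_dist_def K_join_class_def)
qed

lemma class_size_K_join:
  assumes "1 \<le> s" and "1 \<le> t"
  shows "class_size (s + t - 1) (K_join_class s) 0 = 1"
    and "class_size (s + t - 1) (K_join_class s) 1 = real s - 1"
    and "class_size (s + t - 1) (K_join_class s) 2 = real t - 1"
proof -
  have "{i \<in> {..<s + t - 1}. K_join_class s i = 0} = {0}"
    and "{i \<in> {..<s + t - 1}. K_join_class s i = 1} = {1..<s}"
    and "{i \<in> {..<s + t - 1}. K_join_class s i = 2} = {s..<s + t - 1}"
    using assms by (auto simp: K_join_class_def)
  then show "class_size (s + t - 1) (K_join_class s) 0 = 1"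
    and "class_size (s + t - 1) (K_join_class s) 1 = real s - 1"
    and "class_size (s + t - 1) (K_join_class s) 2 = real t - 1"
    using assms by (simp_all add: class_size_def)
qed

lemma dist_power_sums_K_join:
  assumes "1 \<le> s" and "1 \<le> t" and n: "n = s + t - 1"
  shows "dist_power_sums n (K_join s t) =
    (real n ^ 2 - 7 * real n + 6 * real (s * t),
     real n ^ 3 - 12 * real n ^ 2 + 23 * real n + (9 * real n - 21) * real (s * t))"
proof -
  have "K_join_class s ` {..<s + t - 1} \<subseteq> {0, 1, 2}" by (auto simp: K_join_class_def)
  from dist_power_sums_by_classes[OF _ this graph_dist_K_join[OF assms(1), where t = t]] assms(1)
  show ?thesis
    unfolding n
    by (simp add: class_size_K_join[OF assms(1,2), unfolded One_nat_def]
        K_join_class_dist_def of_nat_diff algebra_simps power2_eq_square power3_eq_cube)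
qed

lemma graph_iso_refl: "graph_iso n E n E"
  unfolding graph_iso_def by (intro conjI exI[of _ id]) auto

lemma graph_iso_sym:
  assumes "graph_iso n1 E1 n2 E2"
  shows "graph_iso n2 E2 n1 E1"
proof -
  obtain f where n: "n1 = n2" and f: "bij_betw f {0..<n1} {0..<n2}"
    and edges: "\<forall>i\<in>{0..<n1}. \<forall>j\<in>{0..<n1}. E1 i j \<longleftrightarrow> E2 (f i) (f j)"
    using assms unfolding graph_iso_def by blast
  let ?g = "inv_into {0..<n1} f"
  have "bij_betw ?g {0..<n2} {0..<n1}" using f by (rule bij_betw_inv_into)
  moreover have "?g i \<in> {0..<n1}" and "f (?g i) = i" if "i \<in> {0..<n2}" for i
    using that bij_betw_imp_surj_on[OF f] by (metis inv_into_into, metis f_inv_into_f)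
  then have "E2 i j \<longleftrightarrow> E1 (?g i) (?g j)" if "i \<in> {0..<n2}" "j \<in> {0..<n2}" for i j
    using that edges by metis
  ultimately show ?thesis using n unfolding graph_iso_def by blast
qed

lemma graph_iso_K_sum_swap: "graph_iso (s + t) (K_sum s t) (s + t) (K_sum t s)"
  unfolding graph_iso_def
proof (intro conjI exI[of _ "\<lambda>i. if i < s then t + i else i - s"] ballI)
  show "bij_betw (\<lambda>i. if i < s then t + i else i - s) {0..<s + t} {0..<s + t}"
    by (rule bij_betw_byWitness[where f' = "\<lambda>j. if j < t then s + j else j - t"]) auto
qed (auto simp: K_sum_def)

lemma graph_iso_K_join_swap:
  assumes "1 \<le> s" and "1 \<le> t"
  shows "graph_iso (s + t - 1) (K_join s t) (s + t - 1) (K_join t s)"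
  unfolding graph_iso_def
proof (intro conjI exI[of _ "\<lambda>i. if i = 0 then 0 else if i < s then i + t - 1 else i + 1 - s"] ballI)
  show "bij_betw (\<lambda>i. if i = 0 then 0 else if i < s then i + t - 1 else i + 1 - s)
      {0..<s + t - 1} {0..<s + t - 1}"
    by (rule bij_betw_byWitness[where
          f' = "\<lambda>j. if j = 0 then 0 else if j < t then j + s - 1 else j + 1 - t"])
      (use assms in auto)
qed (use assms in \<open>auto simp: K_join_def\<close>)

lemma K_pend_eq_K_join: "2 \<le> n \<Longrightarrow> K_pend n (n - 1) = K_join (n - 1) 2"
  by (intro ext) (auto simp: K_pend_def K_join_def)

section \<open>Comparing the power sums\<close>

lemma sum_prod_eq_imp_swap:
  fixes s t s' t' :: nat
  assumes sum: "s + t = s' + t'" and prod: "s * t = s' * t'"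
  shows "(s = s' \<and> t = t') \<or> (s = t' \<and> t = s')"
proof -
  have "real s + real t = real s' + real t'" and "real s * real t = real s' * real t'"
    using sum prod by (metis of_nat_add, metis of_nat_mult)
  then have "(real s - real s') * (real s - real t') = 0"
    by (simp add: algebra_simps) (metis add.commute add_diff_cancel_left' distrib_left mult.commute)
  then show ?thesis using sum by auto
qed

lemma K_pend_iso_K_pend_of_dist_power_sums:
  assumes "3 \<le> h" and "3 \<le> h'" and "h \<le> n" and "h' \<le> n"
    and eq: "dist_power_sums n (K_pend n h) = dist_power_sums n (K_pend n h')"
  shows "graph_iso n (K_pend n h) n (K_pend n h')"
proof -
  have "(real h - real h') * (real h + real h' - 3) = 0"
    using eq dist_power_sums_K_pend[of h n] dist_power_sums_K_pend[of h' n] assms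
    by (simp add: algebra_simps power2_eq_square)
  then have "h = h'" using assms(1,2) by simp
  then show ?thesis by (simp add: graph_iso_refl)
qed

lemma K_sum_iso_K_sum_of_dist_power_sums:
  assumes "1 \<le> s" and "1 \<le> t" and "1 \<le> s'" and "1 \<le> t'" and n: "n = s + t" "n = s' + t'"
    and eq: "dist_power_sums n (K_sum s t) = dist_power_sums n (K_sum s' t')"
  shows "graph_iso n (K_sum s t) n (K_sum s' t')"
proof -
  have "real (s * t) = real (s' * t')"
    using eq dist_power_sums_K_sum[OF assms(1,2) n(1)] dist_power_sums_K_sum[OF assms(3,4) n(2)] by simp
  then have "(s = s' \<and> t = t') \<or> (s = t' \<and> t = s')"
    using sum_prod_eq_imp_swap n of_nat_eq_iff by metis
  then show ?thesis using n graph_iso_refl graph_iso_K_sum_swap by auto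
qed

lemma K_join_iso_K_join_of_dist_power_sums:
  assumes "1 \<le> s" and "1 \<le> t" and "1 \<le> s'" and "1 \<le> t'" and n: "n = s + t - 1" "n = s' + t' - 1"
    and eq: "dist_power_sums n (K_join s t) = dist_power_sums n (K_join s' t')"
  shows "graph_iso n (K_join s t) n (K_join s' t')"
proof -
  have "real (s * t) = real (s' * t')"
    using eq dist_power_sums_K_join[OF assms(1,2) n(1)] dist_power_sums_K_join[OF assms(3,4) n(2)] by simp
  moreover have "s + t = s' + t'" using n assms by linarith
  ultimately have "(s = s' \<and> t = t') \<or> (s = t' \<and> t = s')"
    using sum_prod_eq_imp_swap of_nat_eq_iff by metis
  then show ?thesis using n assms(1,2) graph_iso_refl graph_iso_K_join_swap by auto
qed

lemma dist_power_sums_K_pend_neq_K_sum: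
  assumes h: "3 \<le> h" "h \<le> n - 1" and st: "2 \<le> s" "2 \<le> t" and n: "n = s + t"
  shows "dist_power_sums n (K_pend n h) \<noteq> dist_power_sums n (K_sum s t)"
proof
  assume eq: "dist_power_sums n (K_pend n h) = dist_power_sums n (K_sum s t)"
  define N H P where "N = real n" and "H = real h" and "P = real (s * t)"
  have square: "4 * N^2 - 10 * N - 3 * H^2 + 9 * H = N^2 - 11 * N + 16 * P + 4"
    and cube: "8 * N^3 - 42 * N^2 + 46 * N + 5 * H^3 + 3 * H^2 - 44 * H + 36 * H * N - 12 * H^2 * N
      = N^3 - 18 * N^2 + 41 * N - 12 + (24 * N - 54) * P"
    using eq dist_power_sums_K_pend[of h n] dist_power_sums_K_sum[of s t n] h st n
    by (simp_all add: N_def H_def P_def)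
  have HN: "3 \<le> H" "H \<le> N - 1" using h st n by (simp_all add: N_def H_def)
  \<comment> \<open>eliminating P from the two equations leaves \<open>(H - N + 1) * Q = 0\<close>\<close>
  define Q where "Q = 40 * H^2 - (20 * N + 97) * H - 20 * N^2 + 103 * N - 12"
  have "2 * ((H - N + 1) * Q) =
      16 * ((8 * N^3 - 42 * N^2 + 46 * N + 5 * H^3 + 3 * H^2 - 44 * H + 36 * H * N - 12 * H^2 * N)
        - (N^3 - 18 * N^2 + 41 * N - 12 + (24 * N - 54) * P))
      - (24 * N - 54) * ((4 * N^2 - 10 * N - 3 * H^2 + 9 * H) - (N^2 - 11 * N + 16 * P + 4))"
    by (simp add: Q_def algebra_simps power2_eq_square power3_eq_cube)
  then have "(H - N + 1) * Q = 0" by (simp add: square cube)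
  moreover have "Q < 0"
  proof -
    have "0 \<le> (H - 3) * (N - 1 - H)" and "0 \<le> N * (N - 1 - H)" using HN by simp_all
    then show ?thesis using HN by (simp add: Q_def algebra_simps power2_eq_square)
  qed
  ultimately have "H = N - 1" by simp
  with square have "P = N - 1" by (simp add: algebra_simps power2_eq_square)
  then have "(real s - 1) * (real t - 1) = 0" by (simp add: N_def P_def n algebra_simps)
  with st show False by simp
qed

lemma dist_power_sums_K_sum_neq_K_join:
  assumes st: "2 \<le> s" "2 \<le> t" "1 \<le> s'" "1 \<le> t'" and n: "n = s + t" "n = s' + t' - 1"
  shows "dist_power_sums n (K_sum s t) \<noteq> dist_power_sums n (K_join s' t')"
proof
  assume eq: "dist_power_sums n (K_sum s t) = dist_power_sums n (K_join s' t')"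
  define N P P' where "N = real n" and "P = real (s * t)" and "P' = real (s' * t')"
  have square: "N^2 - 11 * N + 16 * P + 4 = N^2 - 7 * N + 6 * P'"
    and cube: "N^3 - 18 * N^2 + 41 * N - 12 + (24 * N - 54) * P = N^3 - 12 * N^2 + 23 * N + (9 * N - 21) * P'"
    using eq dist_power_sums_K_sum[OF _ _ n(1)] dist_power_sums_K_join[OF st(3,4) n(2)] st
    by (simp_all add: N_def P_def P'_def)
  have "12 * (P - N + 1) =
      6 * ((N^3 - 18 * N^2 + 41 * N - 12 + (24 * N - 54) * P) - (N^3 - 12 * N^2 + 23 * N + (9 * N - 21) * P'))
      - (9 * N - 21) * ((N^2 - 11 * N + 16 * P + 4) - (N^2 - 7 * N + 6 * P'))"
    by (simp add: algebra_simps power2_eq_square power3_eq_cube)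
  then have "P = N - 1" by (simp add: square cube)
  then have "(real s - 1) * (real t - 1) = 0" by (simp add: N_def P_def n(1) algebra_simps)
  with st show False by simp
qed

lemma K_pend_iso_K_join_of_dist_power_sums:
  assumes h: "3 \<le> h" "h \<le> n - 1" and st: "2 \<le> s" "2 \<le> t" and n: "n = s + t - 1"
    and eq: "dist_power_sums n (K_pend n h) = dist_power_sums n (K_join s t)"
  shows "graph_iso n (K_pend n h) n (K_join s t)"
proof -
  define N H P where "N = real n" and "H = real h" and "P = real (s * t)"
  have square: "4 * N^2 - 10 * N - 3 * H^2 + 9 * H = N^2 - 7 * N + 6 * P"
    and cube: "8 * N^3 - 42 * N^2 + 46 * N + 5 * H^3 + 3 * H^2 - 44 * H + 36 * H * N - 12 * H^2 * N
      = N^3 - 12 * N^2 + 23 * N + (9 * N - 21) * P"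
    using eq dist_power_sums_K_pend[of h n] dist_power_sums_K_join[OF _ _ n] h st
    by (simp_all add: N_def H_def P_def)
  have HN: "3 \<le> H" "H \<le> N - 1" using h st n by (simp_all add: N_def H_def)
  have "15 * ((H - N + 1) * (H - N) * (2 * H + N - 5)) =
      6 * ((8 * N^3 - 42 * N^2 + 46 * N + 5 * H^3 + 3 * H^2 - 44 * H + 36 * H * N - 12 * H^2 * N)
        - (N^3 - 12 * N^2 + 23 * N + (9 * N - 21) * P))
      - (9 * N - 21) * ((4 * N^2 - 10 * N - 3 * H^2 + 9 * H) - (N^2 - 7 * N + 6 * P))"
    by (simp add: algebra_simps power2_eq_square power3_eq_cube)
  then have "(H - N + 1) * (H - N) * (2 * H + N - 5) = 0" by (simp add: square cube)
  with HN have H: "H = N - 1" by simp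
  with square have "P = 2 * N - 2" by (simp add: algebra_simps power2_eq_square)
  then have "(real s - 2) * (real t - 2) = 0" using st by (simp add: N_def P_def n algebra_simps)
  then have "s = 2 \<or> t = 2" by simp
  moreover have "h = n - 1" using H h by (simp add: N_def H_def)
  ultimately show ?thesis
    using n st graph_iso_refl graph_iso_K_join_swap[of "n - 1" 2] K_pend_eq_K_join[of n] by auto
qed

lemma K_pend_iso_of_dist_power_sums:
  assumes h: "3 \<le> h" "h \<le> n - 1" and "in_families n E"
    and eq: "dist_power_sums n (K_pend n h) = dist_power_sums n E"
  shows "graph_iso n (K_pend n h) n E"
  using \<open>in_families n E\<close> unfolding in_families_def
proof (elim disjE exE conjE)
  fix h' assume "3 \<le> h'" "h' \<le> n - 1" "E = K_pend n h'"
  then show ?thesis using h eq K_pend_iso_K_pend_of_dist_power_sums[of h h' n] by simp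
next
  fix s t assume "2 \<le> s" "2 \<le> t" "n = s + t" "E = K_sum s t"
  then show ?thesis using h eq dist_power_sums_K_pend_neq_K_sum by blast
next
  fix s t assume "2 \<le> s" "2 \<le> t" "n = s + t - 1" "E = K_join s t"
  then show ?thesis using h eq K_pend_iso_K_join_of_dist_power_sums by blast
qed

lemma K_sum_iso_of_dist_power_sums:
  assumes st: "2 \<le> s" "2 \<le> t" "n = s + t" and "in_families n E"
    and eq: "dist_power_sums n (K_sum s t) = dist_power_sums n E"
  shows "graph_iso n (K_sum s t) n E"
  using \<open>in_families n E\<close> unfolding in_families_def
proof (elim disjE exE conjE)
  fix h assume "3 \<le> h" "h \<le> n - 1" "E = K_pend n h"
  then show ?thesis using st eq dist_power_sums_K_pend_neq_K_sum by metis
next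
  fix s' t' assume "2 \<le> s'" "2 \<le> t'" "n = s' + t'" "E = K_sum s' t'"
  then show ?thesis using st eq K_sum_iso_K_sum_of_dist_power_sums[of s t s' t' n] by simp
next
  fix s' t' assume "2 \<le> s'" "2 \<le> t'" "n = s' + t' - 1" "E = K_join s' t'"
  then show ?thesis using st eq dist_power_sums_K_sum_neq_K_join by auto
qed

lemma K_join_iso_of_dist_power_sums:
  assumes st: "2 \<le> s" "2 \<le> t" "n = s + t - 1" and "in_families n E"
    and eq: "dist_power_sums n (K_join s t) = dist_power_sums n E"
  shows "graph_iso n (K_join s t) n E"
  using \<open>in_families n E\<close> unfolding in_families_def
proof (elim disjE exE conjE)
  fix h assume "3 \<le> h" "h \<le> n - 1" "E = K_pend n h"
  then show ?thesis using st eq K_pend_iso_K_join_of_dist_power_sums graph_iso_sym by metis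
next
  fix s' t' assume "2 \<le> s'" "2 \<le> t'" "n = s' + t'" "E = K_sum s' t'"
  then show ?thesis using st eq dist_power_sums_K_sum_neq_K_join by (metis le_trans one_le_numeral)
next
  fix s' t' assume "2 \<le> s'" "2 \<le> t'" "n = s' + t' - 1" "E = K_join s' t'"
  then show ?thesis using st eq K_join_iso_K_join_of_dist_power_sums[of s t s' t' n] by simp
qed

theorem corollary2p8:
  assumes "in_families n1 E1" and "in_families n2 E2"
    and "D_cospectral n1 E1 n2 E2"
  shows "graph_iso n1 E1 n2 E2"
proof -
  have "3 \<le> n1" using assms(1) by (auto simp: in_families_def)
  then have n: "n1 = n2" and eq: "dist_power_sums n1 E1 = dist_power_sums n1 E2"
    using D_cospectral_dist_power_sums[OF assms(3)] by auto
  have E2: "in_families n1 E2" using assms(2) n by simp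
  have "graph_iso n1 E1 n1 E2"
    using assms(1) unfolding in_families_def
  proof (elim disjE exE conjE)
    fix h assume "3 \<le> h" "h \<le> n1 - 1" "E1 = K_pend n1 h"
    then show ?thesis using K_pend_iso_of_dist_power_sums E2 eq by blast
  next
    fix s t assume "2 \<le> s" "2 \<le> t" "n1 = s + t" "E1 = K_sum s t"
    then show ?thesis using K_sum_iso_of_dist_power_sums E2 eq by blast
  next
    fix s t assume "2 \<le> s" "2 \<le> t" "n1 = s + t - 1" "E1 = K_join s t"
    then show ?thesis using K_join_iso_of_dist_power_sums E2 eq by blast
  qed
  then show ?thesis using n by simp
qed

end
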